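(* Let $B\ge 1$, let $\mathcal{A}=\{1,\dots,A\}$ and let $\Phi:\{1,\dots,B\}\to\mathcal{A}$ be a function. Let $\Delta(\varepsilon)$, $\varepsilon\ge 0$, be a family of $B\times B$ stochastic matrices whose entries are analytic functions of $\varepsilon$ at $\varepsilon=0$, and such that for every $\varepsilon>0$, $\Delta(\varepsilon)$ is non-negative and irreducible. For $\varepsilon>0$ let $Y$ be the stationary Markov chain with transition matrix $\Delta(\varepsilon)$ and let $Z=\Phi(Y)$. Then for any fixed $n$ and any fixed sequence $z_{-n}^{0}\in\mathcal{A}^{n+1}$: (1) $p(z_{-n}^{-1})=P(Z_{-n}^{-1}=z_{-n}^{-1})$ is analytic around $\varepsilon=0$; (2) for each $i$ with $-n\le i\le -1$, the vector $p(y_i=\cdot\,|z_{-n}^i):=(P(Y_i=b\mid Z_{-n}^i=z_{-n}^i))_{b=1,\dots,B}$ is analytic around $\varepsilon=0$; (3) $p(z_0|z_{-n}^{-1})=P(Z_0=z_0\mid Z_{-n}^{-1}=z_{-n}^{-1})$ is analytic around $\varepsilon=0$.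
   Context: "Analytic around $\varepsilon=0$" means that the function, defined for small $\varepsilon>0$, coincides there with a function given by a convergent power series in $\varepsilon$ in a neighborhood of $0$ (i.e. it extends analytically to $\varepsilon=0$). For $a\in\mathcal{A}$, $\Delta_a$ denotes the $B\times B$ matrix with $\Delta_a(i,j)=\Delta(i,j)$ if $\Phi(j)=a$ and $\Delta_a(i,j)=0$ otherwise; so $p(z_{-n}^{-1})=\pi\Delta_{z_{-n}}\cdots\Delta_{z_{-1}}\mathbf{1}$ with $\pi=\pi(\varepsilon)$ the stationary vector of $\Delta(\varepsilon)$. Conditional probabilities are considered for sequences whose conditioning event has positive probability for small $\varepsilon>0$. *)

theory Defs
  imports Complex_Main
begin

text \<open>States are 0..B-1; a B x B matrix is a function nat => nat => real (only indices < B matter).\<close>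

fun mpow :: "nat \<Rightarrow> (nat \<Rightarrow> nat \<Rightarrow> real) \<Rightarrow> nat \<Rightarrow> nat \<Rightarrow> nat \<Rightarrow> real" where
  "mpow B M 0 i j = (if i = j then 1 else 0)"
| "mpow B M (Suc k) i j = (\<Sum>l<B. mpow B M k i l * M l j)"

definition stochastic :: "nat \<Rightarrow> (nat \<Rightarrow> nat \<Rightarrow> real) \<Rightarrow> bool" where
  "stochastic B M \<longleftrightarrow> (\<forall>i<B. \<forall>j<B. M i j \<ge> 0) \<and> (\<forall>i<B. (\<Sum>j<B. M i j) = 1)"

definition irreducible_mat :: "nat \<Rightarrow> (nat \<Rightarrow> nat \<Rightarrow> real) \<Rightarrow> bool" where
  "irreducible_mat B M \<longleftrightarrow> (\<forall>i<B. \<forall>j<B. \<exists>k. mpow B M k i j > 0)"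

definition stationary_vec :: "nat \<Rightarrow> (nat \<Rightarrow> nat \<Rightarrow> real) \<Rightarrow> (nat \<Rightarrow> real) \<Rightarrow> bool" where
  "stationary_vec B M p \<longleftrightarrow> (\<forall>j<B. p j \<ge> 0) \<and> (\<Sum>j<B. p j) = 1 \<and>
     (\<forall>j<B. (\<Sum>i<B. p i * M i j) = p j)"

text \<open>Row vector v times Delta_a, where Delta_a keeps the columns j with Phi j = a.\<close>
definition step_vec :: "nat \<Rightarrow> (nat \<Rightarrow> nat) \<Rightarrow> (nat \<Rightarrow> nat \<Rightarrow> real) \<Rightarrow> (nat \<Rightarrow> real) \<Rightarrow> nat \<Rightarrow> nat \<Rightarrow> real" where
  "step_vec B Phi M v a j = (if Phi j = a then (\<Sum>i<B. v i * M i j) else 0)"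

fun fwd_vec :: "nat \<Rightarrow> (nat \<Rightarrow> nat) \<Rightarrow> (nat \<Rightarrow> nat \<Rightarrow> real) \<Rightarrow> (nat \<Rightarrow> real) \<Rightarrow> nat list \<Rightarrow> nat \<Rightarrow> real" where
  "fwd_vec B Phi M v [] = v"
| "fwd_vec B Phi M v (a # ws) = fwd_vec B Phi M (step_vec B Phi M v a) ws"

text \<open>p(w) = pi Delta_{w_1} ... Delta_{w_m} 1\<close>
definition word_prob :: "nat \<Rightarrow> (nat \<Rightarrow> nat) \<Rightarrow> (nat \<Rightarrow> nat \<Rightarrow> real) \<Rightarrow> (nat \<Rightarrow> real) \<Rightarrow> nat list \<Rightarrow> real" where
  "word_prob B Phi M p ws = (\<Sum>j<B. fwd_vec B Phi M p ws j)"

text \<open>P(Y_last = b, Z = w) = (pi Delta_{w_1} ... Delta_{w_m})_b ; conditional = ratio\<close>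
definition cond_state_prob :: "nat \<Rightarrow> (nat \<Rightarrow> nat) \<Rightarrow> (nat \<Rightarrow> nat \<Rightarrow> real) \<Rightarrow> (nat \<Rightarrow> real) \<Rightarrow> nat list \<Rightarrow> nat \<Rightarrow> real" where
  "cond_state_prob B Phi M p ws b = fwd_vec B Phi M p ws b / word_prob B Phi M p ws"

definition cond_next_prob :: "nat \<Rightarrow> (nat \<Rightarrow> nat) \<Rightarrow> (nat \<Rightarrow> nat \<Rightarrow> real) \<Rightarrow> (nat \<Rightarrow> real) \<Rightarrow> nat list \<Rightarrow> nat \<Rightarrow> real" where
  "cond_next_prob B Phi M p ws a = word_prob B Phi M p (ws @ [a]) / word_prob B Phi M p ws"

definition analytic_at_0 :: "(real \<Rightarrow> real) \<Rightarrow> bool" where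
  "analytic_at_0 f \<longleftrightarrow> (\<exists>r>0. \<exists>c::nat \<Rightarrow> real.
      (\<forall>x. \<bar>x\<bar> < r \<longrightarrow> summable (\<lambda>k. c k * x ^ k)) \<and>
      (\<forall>e. 0 < e \<and> e < r \<longrightarrow> (\<lambda>k. c k * e ^ k) sums f e))"

definition analytic_at_0_closed :: "(real \<Rightarrow> real) \<Rightarrow> bool" where
  "analytic_at_0_closed f \<longleftrightarrow> (\<exists>r>0. \<exists>c::nat \<Rightarrow> real.
      (\<forall>x. \<bar>x\<bar> < r \<longrightarrow> summable (\<lambda>k. c k * x ^ k)) \<and>
      (\<forall>e. 0 \<le> e \<and> e < r \<longrightarrow> (\<lambda>k. c k * e ^ k) sums f e))"

end

theory Submission
  imports Defs "HOL-Complex_Analysis.Complex_Analysis" "Jordan_Normal_Form.Determinant"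
begin

text \<open>
  Call a real function a holomorphic germ at \<open>0\<^sup>+\<close> if it agrees, for small \<open>\<epsilon> > 0\<close>, with a
  complex function analytic at \<open>0\<close>; these are exactly the functions analytic around \<open>\<epsilon> = 0\<close>.
  Such germs form a ring, and a quotient of two of them that stays bounded as \<open>\<epsilon> \<rightarrow> 0\<^sup>+\<close> is again
  one: the complex quotient has at worst a pole at \<open>0\<close>, which boundedness along the positive axis
  rules out, so the singularity is removable.

  The stationary vector is such a bounded quotient. With \<open>N = I - \<Delta> + J\<close>, \<open>J\<close> the all-ones
  matrix, stationarity gives \<open>\<pi> N = (1,\<dots>,1)\<close>, and for irreducible \<open>\<Delta>\<close> the matrix \<open>N\<close> is
  invertible: a kernel vector of \<open>N\<close> is \<open>\<Delta>\<close>-harmonic, hence constant by the maximum principle,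
  and has zero sum. So \<open>det N \<cdot> \<pi>\<^sub>j = \<Sum>\<^sub>i (adj N)\<^sub>i\<^sub>j\<close>, a ratio of polynomials in the entries of
  \<open>\<Delta>\<close> with values in \<open>[0,1]\<close>. Word probabilities are polynomials in the entries of \<open>\<pi>\<close> and
  \<open>\<Delta>\<close>, and the conditional probabilities are quotients of those bounded by \<open>1\<close>.
\<close>

section \<open>Real functions with a holomorphic extension at 0\<close>

definition holo_at_0 :: "(real \<Rightarrow> real) \<Rightarrow> bool" where
  "holo_at_0 f \<longleftrightarrow> (\<exists>F. F analytic_on {0} \<and>
     (\<forall>\<^sub>F e in at_right 0. F (complex_of_real e) = complex_of_real (f e)))"

lemma holo_at_0I:
  "F analytic_on {0} \<Longrightarrow> (\<forall>\<^sub>F e in at_right 0. F (complex_of_real e) = complex_of_real (f e))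
    \<Longrightarrow> holo_at_0 f"
  unfolding holo_at_0_def by blast

lemma holo_at_0E:
  assumes "holo_at_0 f"
  obtains F where "F analytic_on {0}"
    "\<forall>\<^sub>F e in at_right 0. F (complex_of_real e) = complex_of_real (f e)"
  using assms unfolding holo_at_0_def by blast

lemma holo_at_0_imp_analytic_at_0:
  assumes "holo_at_0 f"
  shows "analytic_at_0 f"
proof -
  obtain F where ana: "F analytic_on {0}"
    and ev: "\<forall>\<^sub>F e in at_right 0. F (complex_of_real e) = complex_of_real (f e)"
    using assms by (rule holo_at_0E)
  obtain r1 where r1: "r1 > 0" "F holomorphic_on ball 0 r1"
    using ana analytic_at_ball by blast
  obtain r2 where r2: "r2 > 0" "\<And>e. 0 < e \<Longrightarrow> e < r2 \<Longrightarrow> F (complex_of_real e) = complex_of_real (f e)"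
    using ev unfolding eventually_at_right_field by auto
  define r where "r = min r1 r2"
  define a where "a k = (deriv ^^ k) F 0 / fact k" for k
  define c where "c k = Re (a k)" for k
  have re_sums: "(\<lambda>k. c k * x ^ k) sums Re (F (complex_of_real x))" if "\<bar>x\<bar> < r" for x
  proof -
    have "(\<lambda>k. a k * complex_of_real x ^ k) sums F (complex_of_real x)"
      using holomorphic_power_series[OF r1(2), of "complex_of_real x"] that
      unfolding a_def by (simp add: r_def)
    from sums_Re[OF this] show ?thesis
      by (simp add: c_def flip: of_real_power)
  qed
  show ?thesis
    unfolding analytic_at_0_def
  proof (intro exI[of _ r] exI[of _ c] conjI allI impI)
    show "r > 0" using r1 r2 by (simp add: r_def)
    show "summable (\<lambda>k. c k * x ^ k)" if "\<bar>x\<bar> < r" for x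
      using re_sums[OF that] by (rule sums_summable)
    show "(\<lambda>k. c k * e ^ k) sums f e" if "0 < e \<and> e < r" for e
      using re_sums[of e] r2(2)[of e] that by (simp add: r_def)
  qed
qed

lemma analytic_at_0_imp_holo_at_0:
  assumes "analytic_at_0 f"
  shows "holo_at_0 f"
proof -
  obtain r c where r: "r > 0" and summ: "\<And>x. \<bar>x\<bar> < r \<Longrightarrow> summable (\<lambda>k. c k * x ^ k)"
    and sums: "\<And>e. 0 < e \<Longrightarrow> e < r \<Longrightarrow> (\<lambda>k. c k * e ^ k) sums f e"
    using assms unfolding analytic_at_0_def by blast
  define P where "P = Abs_fps (\<lambda>k. complex_of_real (c k))"
  have "summable (\<lambda>k. complex_of_real (c k * (r/2) ^ k))"
    by (rule summable_of_real, rule summ) (use r in simp)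
  moreover have "complex_of_real (c k * (r/2) ^ k) = fps_nth P k * complex_of_real (r/2) ^ k" for k
    by (simp add: P_def)
  ultimately have "summable (\<lambda>k. fps_nth P k * complex_of_real (r/2) ^ k)"
    by (simp only:)
  then have "ereal (r/2) \<le> fps_conv_radius P"
    using r unfolding fps_conv_radius_def by (auto dest: conv_radius_geI)
  then have "ball 0 (r/2) \<subseteq> eball 0 (fps_conv_radius P)"
    by (rule ball_eball_mono)
  then have "eval_fps P analytic_on {0}"
    using r by (intro holomorphic_on_imp_analytic_at[of _ "ball 0 (r/2)"] holomorphic_on_eval_fps) auto
  moreover have "\<forall>\<^sub>F e in at_right 0. eval_fps P (complex_of_real e) = complex_of_real (f e)"
    unfolding eventually_at_right_field
  proof (intro exI[of _ r] conjI allI impI)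
    fix e :: real assume "0 < e" "e < r"
    then have "(\<lambda>k. fps_nth P k * complex_of_real e ^ k) sums complex_of_real (f e)"
      using sums_of_real[OF sums] by (simp add: P_def)
    then show "eval_fps P (complex_of_real e) = complex_of_real (f e)"
      unfolding eval_fps_def by (simp add: sums_iff)
  qed (use r in auto)
  ultimately show ?thesis by (rule holo_at_0I)
qed

lemma analytic_at_0_closed_imp_analytic_at_0: "analytic_at_0_closed f \<Longrightarrow> analytic_at_0 f"
  unfolding analytic_at_0_closed_def analytic_at_0_def by force

lemma holo_at_0_const: "holo_at_0 (\<lambda>_. c)"
  by (rule holo_at_0I[of "\<lambda>_. complex_of_real c"]) auto

lemma holo_at_0_cong:
  assumes "holo_at_0 f" "\<forall>\<^sub>F e in at_right 0. f e = g e"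
  shows "holo_at_0 g"
proof -
  obtain F where F: "F analytic_on {0}"
    "\<forall>\<^sub>F e in at_right 0. F (complex_of_real e) = complex_of_real (f e)"
    using assms(1) by (rule holo_at_0E)
  show ?thesis
    by (rule holo_at_0I[OF F(1)]) (use F(2) assms(2) in eventually_elim, simp)
qed

lemma holo_at_0_binop:
  assumes "holo_at_0 f" "holo_at_0 g"
    and analytic: "\<And>F G. F analytic_on {0} \<Longrightarrow> G analytic_on {0} \<Longrightarrow> (\<lambda>w. opc (F w) (G w)) analytic_on {0}"
    and of_real: "\<And>x y. opc (complex_of_real x) (complex_of_real y) = complex_of_real (opr x y)"
  shows "holo_at_0 (\<lambda>e. opr (f e) (g e))"
proof -
  obtain F where F: "F analytic_on {0}"
    "\<forall>\<^sub>F e in at_right 0. F (complex_of_real e) = complex_of_real (f e)"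
    using assms(1) by (rule holo_at_0E)
  obtain G where G: "G analytic_on {0}"
    "\<forall>\<^sub>F e in at_right 0. G (complex_of_real e) = complex_of_real (g e)"
    using assms(2) by (rule holo_at_0E)
  show ?thesis
    by (rule holo_at_0I[OF analytic[OF F(1) G(1)]]) (use F(2) G(2) in eventually_elim, simp add: of_real)
qed

lemma holo_at_0_add: "holo_at_0 f \<Longrightarrow> holo_at_0 g \<Longrightarrow> holo_at_0 (\<lambda>e. f e + g e)"
  by (rule holo_at_0_binop[where opc = "(+)"]) (auto intro: analytic_intros)

lemma holo_at_0_diff: "holo_at_0 f \<Longrightarrow> holo_at_0 g \<Longrightarrow> holo_at_0 (\<lambda>e. f e - g e)"
  by (rule holo_at_0_binop[where opc = "(-)"]) (auto intro: analytic_intros)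

lemma holo_at_0_mult: "holo_at_0 f \<Longrightarrow> holo_at_0 g \<Longrightarrow> holo_at_0 (\<lambda>e. f e * g e)"
  by (rule holo_at_0_binop[where opc = "(*)"]) (auto intro: analytic_intros)

lemma holo_at_0_sum:
  "finite S \<Longrightarrow> (\<And>i. i \<in> S \<Longrightarrow> holo_at_0 (f i)) \<Longrightarrow> holo_at_0 (\<lambda>e. \<Sum>i\<in>S. f i e)"
  by (induction S rule: finite_induct) (auto intro: holo_at_0_const holo_at_0_add)

lemma holo_at_0_prod:
  "finite S \<Longrightarrow> (\<And>i. i \<in> S \<Longrightarrow> holo_at_0 (f i)) \<Longrightarrow> holo_at_0 (\<lambda>e. \<Prod>i\<in>S. f i e)"
  by (induction S rule: finite_induct) (auto intro: holo_at_0_const holo_at_0_mult)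

lemma filterlim_of_real_at_right_0: "filterlim complex_of_real (at 0) (at_right 0)"
  unfolding filterlim_at
  by (auto intro: eventually_mono[OF eventually_at_right_less] tendsto_eq_intros
      simp: tendsto_ident_at)

lemma holo_at_0_divide:
  assumes "holo_at_0 f" "holo_at_0 g"
    and bounded: "\<forall>\<^sub>F e in at_right 0. \<bar>f e / g e\<bar> \<le> C"
  shows "holo_at_0 (\<lambda>e. f e / g e)"
proof -
  obtain F where F: "F analytic_on {0}"
    "\<forall>\<^sub>F e in at_right 0. F (complex_of_real e) = complex_of_real (f e)"
    using assms(1) by (rule holo_at_0E)
  obtain G where G: "G analytic_on {0}"
    "\<forall>\<^sub>F e in at_right 0. G (complex_of_real e) = complex_of_real (g e)"
    using assms(2) by (rule holo_at_0E)
  define Q where "Q w = F w / G w" for w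
  have Q_real: "\<forall>\<^sub>F e in at_right 0. Q (complex_of_real e) = complex_of_real (f e / g e)"
    using F(2) G(2) by eventually_elim (simp add: Q_def)
  have "isolated_singularity_at F 0" "isolated_singularity_at G 0" "not_essential F 0" "not_essential G 0"
    using F(1) G(1) by (auto intro: isolated_singularity_at_analytic not_essential_analytic)
  then have isolated: "isolated_singularity_at Q 0" and not_essential: "not_essential Q 0"
    unfolding Q_def by (auto intro: isolated_singularity_at_divide not_essential_divide)
  have "\<not> is_pole Q 0"
  proof
    assume "is_pole Q 0"
    then have "filterlim (\<lambda>e. Q (complex_of_real e)) at_infinity (at_right 0)"
      unfolding is_pole_def using filterlim_of_real_at_right_0 by (rule filterlim_compose)
    from filterlim_at_infinity_imp_norm_at_top[OF this]
    have "\<forall>\<^sub>F e in at_right 0. C < norm (Q (complex_of_real e))"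
      unfolding filterlim_at_top_dense by blast
    with Q_real bounded have "\<forall>\<^sub>F e in at_right (0::real). False"
      by eventually_elim (metis norm_of_real not_le)
    then show False by simp
  qed
  then obtain c where "Q \<midarrow>0\<rightarrow> c"
    using not_essential unfolding not_essential_def by blast
  with isolated have "(\<lambda>w. if w = 0 then c else Q w) analytic_on {0}"
    by (rule removable_singularity')
  then show ?thesis
    by (rule holo_at_0I) (use Q_real eventually_at_right_less in eventually_elim, simp)
qed

lemma holo_at_0_det:
  assumes "\<And>e. A e \<in> carrier_mat n n"
    and entries: "\<And>i j. i < n \<Longrightarrow> j < n \<Longrightarrow> holo_at_0 (\<lambda>e. A e $$ (i, j))"
  shows "holo_at_0 (\<lambda>e. det (A e))"
proof -
  have "p permutes {0..<n} \<Longrightarrow> i < n \<Longrightarrow> p i < n" for p i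
    using permutes_in_image[of p "{0..<n}" i] by simp
  then have "holo_at_0 (\<lambda>e. \<Sum>p | p permutes {0..<n}. signof p * (\<Prod>i = 0..<n. A e $$ (i, p i)))"
    by (intro holo_at_0_sum holo_at_0_mult holo_at_0_prod holo_at_0_const entries)
      (auto simp: finite_permutations)
  then show ?thesis
    by (simp only: det_def'[OF assms(1)])
qed

lemma holo_at_0_adj_mat:
  assumes carrier: "\<And>e. A e \<in> carrier_mat n n"
    and entries: "\<And>i j. i < n \<Longrightarrow> j < n \<Longrightarrow> holo_at_0 (\<lambda>e. A e $$ (i, j))"
    and "i < n" "j < n"
  shows "holo_at_0 (\<lambda>e. adj_mat (A e) $$ (i, j))"
proof -
  have dims: "dim_row (A e) = n" "dim_col (A e) = n" for e
    using carrier[of e] by auto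
  have "holo_at_0 (\<lambda>e. (-1) ^ (j + i) * det (mat_delete (A e) j i))"
  proof (intro holo_at_0_mult holo_at_0_const holo_at_0_det)
    show "mat_delete (A e) j i \<in> carrier_mat (n - 1) (n - 1)" for e
      using mat_delete_carrier[OF carrier] .
    fix a b assume "a < n - 1" "b < n - 1"
    then show "holo_at_0 (\<lambda>e. mat_delete (A e) j i $$ (a, b))"
      by (simp add: mat_delete_def dims entries)
  qed
  then show ?thesis
    using assms(3,4) by (simp add: adj_mat_def cofactor_def dims)
qed

section \<open>The stationary vector of an irreducible stochastic matrix\<close>

lemma mpow_nonneg:
  assumes "stochastic B M" "j < B"
  shows "mpow B M k i j \<ge> 0"
  using assms(2)
proof (induction k arbitrary: j)
  case (Suc k)
  then show ?case
    using assms(1) unfolding stochastic_def by (auto intro!: sum_nonneg)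
qed simp

lemma harmonic_eq_max_at_successor:
  assumes st: "stochastic B M"
    and harmonic: "(\<Sum>j<B. M i j * x j) = x i"
    and max: "\<And>j. j < B \<Longrightarrow> x j \<le> x i"
    and "i < B" "l < B" "M i l > 0"
  shows "x l = x i"
proof -
  have "(\<Sum>j<B. M i j * (x i - x j)) = x i * (\<Sum>j<B. M i j) - (\<Sum>j<B. M i j * x j)"
    by (simp add: algebra_simps sum_subtractf sum_distrib_left)
  also have "\<dots> = 0"
    using st harmonic \<open>i < B\<close> unfolding stochastic_def by simp
  finally have "\<forall>j\<in>{..<B}. M i j * (x i - x j) = 0"
    using st max \<open>i < B\<close> unfolding stochastic_def
    by (subst (asm) sum_nonneg_eq_0_iff) auto
  then have "M i l * (x i - x l) = 0"
    using \<open>l < B\<close> by blast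
  then show ?thesis
    using \<open>M i l > 0\<close> by simp
qed

text \<open>Maximum principle: an irreducible chain spreads the maximum of a harmonic vector
  along positive paths to every state.\<close>

lemma harmonic_vec_const:
  assumes st: "stochastic B M" and irr: "irreducible_mat B M"
    and harmonic: "\<And>i. i < B \<Longrightarrow> (\<Sum>j<B. M i j * x j) = x i"
    and "i < B" "j < B"
  shows "x i = x j"
proof -
  have finite: "finite (x ` {..<B})" and nonempty: "x ` {..<B} \<noteq> {}"
    using \<open>i < B\<close> by auto
  obtain i0 where i0: "i0 < B" "x i0 = Max (x ` {..<B})"
    using Max_in[OF finite nonempty] by auto
  have max: "x l \<le> x i0" if "l < B" for l
    using i0(2) finite that by simp
  have "x l = x i0" if "mpow B M k i0 l > 0" "l < B" for k l
    using that
  proof (induction k arbitrary: l)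
    case 0
    then show ?case by (cases "i0 = l") auto
  next
    case (Suc k)
    obtain l' where l': "l' < B" "mpow B M k i0 l' * M l' l > 0"
      using Suc.prems(1) sum_nonpos[of "{..<B}" "\<lambda>l'. mpow B M k i0 l' * M l' l"]
      by (force simp: not_le[symmetric])
    have "mpow B M k i0 l' \<ge> 0" "M l' l \<ge> 0"
      using mpow_nonneg[OF st l'(1)] st l'(1) Suc.prems(2) unfolding stochastic_def by auto
    then have "mpow B M k i0 l' > 0" "M l' l > 0"
      using l'(2) by (auto simp: zero_less_mult_iff)
    then have "x l' = x i0"
      using Suc.IH l'(1) by blast
    then show ?case
      using harmonic_eq_max_at_successor[OF st harmonic[OF l'(1)] _ l'(1) Suc.prems(2)]
        \<open>M l' l > 0\<close> max by simp
  qed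
  then have "x l = x i0" if "l < B" for l
    using irr i0(1) that unfolding irreducible_mat_def by blast
  then show ?thesis
    using assms(4,5) by simp
qed

lemma mult_mat_vec_index_sum:
  "A \<in> carrier_mat n n \<Longrightarrow> v \<in> carrier_vec n \<Longrightarrow> i < n \<Longrightarrow>
    (A *\<^sub>v v) $ i = (\<Sum>j<n. A $$ (i, j) * v $ j)"
  by (simp add: scalar_prod_def atLeast0LessThan)

lemma mult_mat_index_sum:
  "A \<in> carrier_mat n n \<Longrightarrow> C \<in> carrier_mat n n \<Longrightarrow> i < n \<Longrightarrow> j < n \<Longrightarrow>
    (A * C) $$ (i, j) = (\<Sum>k<n. A $$ (i, k) * C $$ (k, j))"
  by (simp add: scalar_prod_def atLeast0LessThan)

definition stationary_system_mat :: "nat \<Rightarrow> (nat \<Rightarrow> nat \<Rightarrow> real) \<Rightarrow> real mat" where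
  "stationary_system_mat B M = mat B B (\<lambda>(i, j). (if i = j then 1 else 0) - M i j + 1)"

lemma stationary_system_mat_carrier: "stationary_system_mat B M \<in> carrier_mat B B"
  unfolding stationary_system_mat_def by simp

lemma stationary_system_mat_index:
  "i < B \<Longrightarrow> j < B \<Longrightarrow> stationary_system_mat B M $$ (i, j) = (if i = j then 1 else 0) - M i j + 1"
  unfolding stationary_system_mat_def by simp

lemma stationary_system_mat_mult_vec:
  assumes "v \<in> carrier_vec B" "i < B"
  shows "(stationary_system_mat B M *\<^sub>v v) $ i = v $ i - (\<Sum>j<B. M i j * v $ j) + (\<Sum>j<B. v $ j)"
proof -
  have "(stationary_system_mat B M *\<^sub>v v) $ i = (\<Sum>j<B. ((if i = j then 1 else 0) - M i j + 1) * v $ j)"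
    using assms by (simp add: mult_mat_vec_index_sum[OF stationary_system_mat_carrier]
        stationary_system_mat_index)
  also have "\<dots> = (\<Sum>j<B. (if i = j then v $ j else 0) - M i j * v $ j + v $ j)"
    by (rule sum.cong) (auto simp: algebra_simps)
  also have "\<dots> = (\<Sum>j<B. (if i = j then v $ j else 0)) - (\<Sum>j<B. M i j * v $ j) + (\<Sum>j<B. v $ j)"
    by (simp add: sum.distrib sum_subtractf)
  finally show ?thesis
    using assms(2) by simp
qed

lemma stationary_vec_mult_system_mat:
  assumes "stationary_vec B M p" "j < B"
  shows "(\<Sum>i<B. p i * stationary_system_mat B M $$ (i, j)) = 1"
proof -
  have "(\<Sum>i<B. p i * stationary_system_mat B M $$ (i, j))
      = (\<Sum>i<B. (if i = j then p i else 0) - p i * M i j + p i)"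
    using assms(2) by (intro sum.cong) (auto simp: stationary_system_mat_index algebra_simps)
  also have "\<dots> = (\<Sum>i<B. if i = j then p i else 0) - (\<Sum>i<B. p i * M i j) + (\<Sum>i<B. p i)"
    by (simp add: sum.distrib sum_subtractf)
  finally show ?thesis
    using assms unfolding stationary_vec_def by simp
qed

lemma stationary_system_mat_kernel:
  fixes v :: "real vec"
  assumes sv: "stationary_vec B M p"
    and v: "v \<in> carrier_vec B" "stationary_system_mat B M *\<^sub>v v = 0\<^sub>v B"
  shows stationary_system_mat_kernel_sum: "(\<Sum>j<B. v $ j) = 0"
    and stationary_system_mat_kernel_harmonic: "\<And>i. i < B \<Longrightarrow> (\<Sum>j<B. M i j * v $ j) = v $ i"
proof -
  define S where "S = (\<Sum>j<B. v $ j)"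
  have kernel: "(\<Sum>j<B. M i j * v $ j) = v $ i + S" if "i < B" for i
    using stationary_system_mat_mult_vec[OF v(1) that, of M] v(2) that by (simp add: S_def)
  text \<open>Pairing the kernel equation with \<open>p\<close> and using \<open>p M = p\<close> leaves \<open>S = 0\<close>.\<close>
  have "(\<Sum>i<B. p i * v $ i) = (\<Sum>j<B. (\<Sum>i<B. p i * M i j) * v $ j)"
    using sv unfolding stationary_vec_def by simp
  also have "\<dots> = (\<Sum>i<B. p i * (\<Sum>j<B. M i j * v $ j))"
    unfolding sum_distrib_left sum_distrib_right mult.assoc by (rule sum.swap)
  also have "\<dots> = (\<Sum>i<B. p i * v $ i) + S * (\<Sum>i<B. p i)"
    by (simp add: kernel algebra_simps sum.distrib sum_distrib_left)
  finally have "S = 0"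
    using sv unfolding stationary_vec_def by simp
  then show "(\<Sum>j<B. v $ j) = 0" "\<And>i. i < B \<Longrightarrow> (\<Sum>j<B. M i j * v $ j) = v $ i"
    using kernel by (simp_all add: S_def)
qed

lemma det_stationary_system_mat_nonzero:
  assumes st: "stochastic B M" and irr: "irreducible_mat B M" and sv: "stationary_vec B M p"
  shows "det (stationary_system_mat B M) \<noteq> 0"
proof
  assume "det (stationary_system_mat B M) = 0"
  then obtain v where v: "v \<in> carrier_vec B" "v \<noteq> 0\<^sub>v B" "stationary_system_mat B M *\<^sub>v v = 0\<^sub>v B"
    using det_0_iff_vec_prod_zero[OF stationary_system_mat_carrier] by blast
  have "0 < B"
    using v(1,2) by (cases B) auto
  then have const: "v $ i = v $ 0" if "i < B" for i
    using harmonic_vec_const[OF st irr stationary_system_mat_kernel_harmonic[OF sv v(1,3)] that] by simp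
  have "(\<Sum>j<B. v $ 0) = 0"
    using stationary_system_mat_kernel_sum[OF sv v(1,3)] const by (metis (no_types, lifting) lessThan_iff sum.cong)
  then have "v $ 0 = 0"
    using \<open>0 < B\<close> by simp
  then have "v = 0\<^sub>v B"
    using v(1) const by (intro eq_vecI) auto
  with v(2) show False ..
qed

lemma stationary_vec_cramer:
  assumes sv: "stationary_vec B M p" and "j < B"
  shows "det (stationary_system_mat B M) * p j = (\<Sum>i<B. adj_mat (stationary_system_mat B M) $$ (i, j))"
proof -
  let ?N = "stationary_system_mat B M" and ?A = "adj_mat (stationary_system_mat B M)"
  have A: "?A \<in> carrier_mat B B"
    using adj_mat(1)[OF stationary_system_mat_carrier] .
  have N_adj: "(\<Sum>i<B. ?N $$ (k, i) * ?A $$ (i, j)) = (if k = j then det ?N else 0)" if "k < B" for k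
  proof -
    have "(?N * ?A) $$ (k, j) = (det ?N \<cdot>\<^sub>m 1\<^sub>m B) $$ (k, j)"
      using adj_mat(2)[OF stationary_system_mat_carrier] by simp
    then show ?thesis
      using mult_mat_index_sum[OF stationary_system_mat_carrier A that \<open>j < B\<close>] that \<open>j < B\<close>
      by simp
  qed
  have "(\<Sum>i<B. ?A $$ (i, j)) = (\<Sum>i<B. (\<Sum>k<B. p k * ?N $$ (k, i)) * ?A $$ (i, j))"
    using stationary_vec_mult_system_mat[OF sv] by simp
  also have "\<dots> = (\<Sum>k<B. p k * (\<Sum>i<B. ?N $$ (k, i) * ?A $$ (i, j)))"
    unfolding sum_distrib_left sum_distrib_right mult.assoc by (rule sum.swap)
  also have "\<dots> = det ?N * p j"
    using \<open>j < B\<close> by (simp add: N_adj if_distrib cong: if_cong)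
  finally show ?thesis ..
qed

lemma holo_at_0_stationary_vec:
  assumes entries: "\<And>i j. i < B \<Longrightarrow> j < B \<Longrightarrow> holo_at_0 (\<lambda>e. M e i j)"
    and chain: "\<And>e. e > 0 \<Longrightarrow> stochastic B (M e) \<and> irreducible_mat B (M e) \<and> stationary_vec B (M e) (p e)"
    and "j < B"
  shows "holo_at_0 (\<lambda>e. p e j)"
proof -
  let ?N = "\<lambda>e. stationary_system_mat B (M e)"
  have N_entries: "holo_at_0 (\<lambda>e. ?N e $$ (i, k))" if "i < B" "k < B" for i k
    using that by (simp add: stationary_system_mat_index holo_at_0_add holo_at_0_diff holo_at_0_const entries)
  have p_bounds: "0 \<le> p e j \<and> p e j \<le> 1" if "e > 0" for e
    using chain[OF that] \<open>j < B\<close> member_le_sum[of j "{..<B}" "p e"]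
    unfolding stationary_vec_def by auto
  have ratio: "\<forall>\<^sub>F e in at_right 0. (\<Sum>i<B. adj_mat (?N e) $$ (i, j)) / det (?N e) = p e j"
    using eventually_at_right_less
    by eventually_elim
      (use chain det_stationary_system_mat_nonzero stationary_vec_cramer[OF _ \<open>j < B\<close>] in
        \<open>metis nonzero_mult_div_cancel_left\<close>)
  have "holo_at_0 (\<lambda>e. (\<Sum>i<B. adj_mat (?N e) $$ (i, j)) / det (?N e))"
  proof (rule holo_at_0_divide[where C = 1])
    show "holo_at_0 (\<lambda>e. \<Sum>i<B. adj_mat (?N e) $$ (i, j))"
      using \<open>j < B\<close> by (intro holo_at_0_sum holo_at_0_adj_mat[OF stationary_system_mat_carrier N_entries]) auto
    show "holo_at_0 (\<lambda>e. det (?N e))"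
      by (intro holo_at_0_det[OF stationary_system_mat_carrier N_entries])
    show "\<forall>\<^sub>F e in at_right 0. \<bar>(\<Sum>i<B. adj_mat (?N e) $$ (i, j)) / det (?N e)\<bar> \<le> 1"
      using ratio eventually_at_right_less by eventually_elim (use p_bounds in force)
  qed
  then show ?thesis
    using ratio by (rule holo_at_0_cong)
qed

section \<open>Probabilities of observed words\<close>

lemma holo_at_0_step_vec:
  assumes "\<And>i j. i < B \<Longrightarrow> j < B \<Longrightarrow> holo_at_0 (\<lambda>e. M e i j)"
    and "\<And>j. j < B \<Longrightarrow> holo_at_0 (\<lambda>e. v e j)" and "j < B"
  shows "holo_at_0 (\<lambda>e. step_vec B Phi (M e) (v e) a j)"
  using assms unfolding step_vec_def
  by (cases "Phi j = a") (auto intro!: holo_at_0_sum holo_at_0_mult holo_at_0_const)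

lemma holo_at_0_fwd_vec:
  assumes "\<And>i j. i < B \<Longrightarrow> j < B \<Longrightarrow> holo_at_0 (\<lambda>e. M e i j)"
  shows "(\<And>j. j < B \<Longrightarrow> holo_at_0 (\<lambda>e. v e j)) \<Longrightarrow> j < B
    \<Longrightarrow> holo_at_0 (\<lambda>e. fwd_vec B Phi (M e) (v e) ws j)"
proof (induction ws arbitrary: v j)
  case (Cons a ws)
  then show ?case
    using Cons.IH[of "\<lambda>e. step_vec B Phi (M e) (v e) a"] holo_at_0_step_vec[OF assms] by simp
qed simp

lemma fwd_vec_nonneg:
  assumes "stochastic B M"
  shows "(\<And>i. i < B \<Longrightarrow> v i \<ge> 0) \<Longrightarrow> j < B \<Longrightarrow> fwd_vec B Phi M v ws j \<ge> 0"
proof (induction ws arbitrary: v j)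
  case (Cons a ws)
  have "step_vec B Phi M v a i \<ge> 0" if "i < B" for i
    using Cons.prems assms that unfolding step_vec_def stochastic_def by (auto intro!: sum_nonneg)
  then show ?case
    using Cons by simp
qed simp

lemma fwd_vec_snoc: "fwd_vec B Phi M v (ws @ [a]) = step_vec B Phi M (fwd_vec B Phi M v ws) a"
  by (induction ws arbitrary: v) auto

lemma sum_step_vec_le:
  assumes st: "stochastic B M" and v: "\<And>i. i < B \<Longrightarrow> v i \<ge> 0"
  shows "(\<Sum>j<B. step_vec B Phi M v a j) \<le> (\<Sum>i<B. v i)"
proof -
  have "(\<Sum>j<B. step_vec B Phi M v a j) \<le> (\<Sum>j<B. \<Sum>i<B. v i * M i j)"
    using st v unfolding step_vec_def stochastic_def by (intro sum_mono) (auto intro: sum_nonneg)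
  also have "\<dots> = (\<Sum>i<B. v i * (\<Sum>j<B. M i j))"
    unfolding sum_distrib_left by (rule sum.swap)
  also have "\<dots> = (\<Sum>i<B. v i)"
    using st unfolding stochastic_def by simp
  finally show ?thesis .
qed

lemma abs_divide_le_one: "0 \<le> x \<Longrightarrow> x \<le> y \<Longrightarrow> \<bar>x / y\<bar> \<le> (1 :: 'a :: linordered_field)"
  by (cases "y = 0") (auto simp: divide_le_eq_1)

context
  fixes B :: nat and Phi :: "nat \<Rightarrow> nat"
    and M :: "real \<Rightarrow> nat \<Rightarrow> nat \<Rightarrow> real" and p :: "real \<Rightarrow> nat \<Rightarrow> real"
  assumes holo_M: "\<And>i j. i < B \<Longrightarrow> j < B \<Longrightarrow> holo_at_0 (\<lambda>e. M e i j)"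
    and holo_p: "\<And>j. j < B \<Longrightarrow> holo_at_0 (\<lambda>e. p e j)"
    and stochastic_M: "\<And>e. e > 0 \<Longrightarrow> stochastic B (M e)"
    and p_nonneg: "\<And>e j. e > 0 \<Longrightarrow> j < B \<Longrightarrow> p e j \<ge> 0"
begin

lemma fwd_vec_family_nonneg: "e > 0 \<Longrightarrow> j < B \<Longrightarrow> fwd_vec B Phi (M e) (p e) ws j \<ge> 0"
  by (rule fwd_vec_nonneg[OF stochastic_M]) (auto intro: p_nonneg)

lemma holo_at_0_word_prob: "holo_at_0 (\<lambda>e. word_prob B Phi (M e) (p e) ws)"
  unfolding word_prob_def
  by (intro holo_at_0_sum holo_at_0_fwd_vec[OF holo_M] holo_p) auto

text \<open>Since \<open>x / 0 = 0\<close>, a ratio \<open>x / y\<close> with \<open>0 \<le> x \<le> y\<close> is bounded by \<open>1\<close> even where the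
  denominator vanishes; so no positivity of the conditioning probability is needed.\<close>

lemma holo_at_0_cond_state_prob:
  assumes "b < B"
  shows "holo_at_0 (\<lambda>e. cond_state_prob B Phi (M e) (p e) ws b)"
  unfolding cond_state_prob_def
proof (rule holo_at_0_divide[where C = 1])
  show "holo_at_0 (\<lambda>e. fwd_vec B Phi (M e) (p e) ws b)"
    using assms by (intro holo_at_0_fwd_vec[OF holo_M] holo_p)
  show "holo_at_0 (\<lambda>e. word_prob B Phi (M e) (p e) ws)"
    by (rule holo_at_0_word_prob)
  show "\<forall>\<^sub>F e in at_right 0. \<bar>fwd_vec B Phi (M e) (p e) ws b / word_prob B Phi (M e) (p e) ws\<bar> \<le> 1"
    using eventually_at_right_less
  proof eventually_elim
    case (elim e)
    have "fwd_vec B Phi (M e) (p e) ws b \<le> word_prob B Phi (M e) (p e) ws"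
      unfolding word_prob_def
      using assms elim fwd_vec_family_nonneg by (intro member_le_sum) auto
    then show ?case
      by (rule abs_divide_le_one[OF fwd_vec_family_nonneg[OF elim assms]])
  qed
qed

lemma holo_at_0_cond_next_prob: "holo_at_0 (\<lambda>e. cond_next_prob B Phi (M e) (p e) ws a)"
  unfolding cond_next_prob_def
proof (rule holo_at_0_divide[where C = 1])
  show "holo_at_0 (\<lambda>e. word_prob B Phi (M e) (p e) (ws @ [a]))"
    "holo_at_0 (\<lambda>e. word_prob B Phi (M e) (p e) ws)"
    by (rule holo_at_0_word_prob)+
  show "\<forall>\<^sub>F e in at_right 0.
      \<bar>word_prob B Phi (M e) (p e) (ws @ [a]) / word_prob B Phi (M e) (p e) ws\<bar> \<le> 1"
    using eventually_at_right_less
  proof eventually_elim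
    case (elim e)
    have "word_prob B Phi (M e) (p e) (ws @ [a]) \<le> word_prob B Phi (M e) (p e) ws"
      unfolding word_prob_def fwd_vec_snoc
      using elim fwd_vec_family_nonneg by (intro sum_step_vec_le stochastic_M) auto
    moreover have "0 \<le> word_prob B Phi (M e) (p e) (ws @ [a])"
      unfolding word_prob_def using elim fwd_vec_family_nonneg by (intro sum_nonneg) auto
    ultimately show ?case
      by (rule abs_divide_le_one[rotated])
  qed
qed

end

theorem proposition2p3:
  fixes B A n :: nat
    and Phi :: "nat \<Rightarrow> nat"
    and Delta :: "real \<Rightarrow> nat \<Rightarrow> nat \<Rightarrow> real"
    and pi :: "real \<Rightarrow> nat \<Rightarrow> real"
    and zs :: "nat list"
  assumes B_pos: "B \<ge> 1"
    and Phi_range: "\<forall>j<B. Phi j \<in> {1..A}"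
    and entries_analytic: "\<forall>i<B. \<forall>j<B. analytic_at_0_closed (\<lambda>e. Delta e i j)"
    and stoch: "\<forall>e\<ge>0. stochastic B (Delta e)"
    and irred: "\<forall>e>0. irreducible_mat B (Delta e)"
    and stat: "\<forall>e>0. stationary_vec B (Delta e) (pi e)"
    and zs_len: "length zs = n + 1"
    and zs_range: "set zs \<subseteq> {1..A}"
  shows "analytic_at_0 (\<lambda>e. word_prob B Phi (Delta e) (pi e) (take n zs))
    \<and> (\<forall>k\<in>{1..n}. (\<exists>d>0. \<forall>e. 0 < e \<and> e < d \<longrightarrow> word_prob B Phi (Delta e) (pi e) (take k zs) > 0)
          \<longrightarrow> (\<forall>b<B. analytic_at_0 (\<lambda>e. cond_state_prob B Phi (Delta e) (pi e) (take k zs) b)))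
    \<and> ((\<exists>d>0. \<forall>e. 0 < e \<and> e < d \<longrightarrow> word_prob B Phi (Delta e) (pi e) (take n zs) > 0)
          \<longrightarrow> analytic_at_0 (\<lambda>e. cond_next_prob B Phi (Delta e) (pi e) (take n zs) (last zs)))"
proof -
  have holo_Delta: "holo_at_0 (\<lambda>e. Delta e i j)" if "i < B" "j < B" for i j
    using entries_analytic that
    by (auto intro: analytic_at_0_imp_holo_at_0 analytic_at_0_closed_imp_analytic_at_0)
  have holo_pi: "holo_at_0 (\<lambda>e. pi e j)" if "j < B" for j
    by (rule holo_at_0_stationary_vec[where M = Delta, OF holo_Delta]) (use stoch irred stat that in auto)
  have pi_nonneg: "pi e j \<ge> 0" if "e > 0" "j < B" for e j
    using stat that unfolding stationary_vec_def by auto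
  have stoch_pos: "stochastic B (Delta e)" if "e > 0" for e
    using stoch that by simp
  note family = holo_Delta holo_pi stoch_pos pi_nonneg
  show ?thesis
    by (auto intro: holo_at_0_imp_analytic_at_0 holo_at_0_word_prob[OF family]
        holo_at_0_cond_state_prob[OF family] holo_at_0_cond_next_prob[OF family])
qed

end
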